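(* Let $p,q$ be distributions on $[n]$, $0<\varepsilon\leq1$, and $m_1\geq m_2>0$. Let $S_1$ consist of $\mathrm{Poi}(m_1)$ i.i.d. samples from $p$ and $T_1$ of $\mathrm{Poi}(m_2)$ i.i.d. samples from $q$, independent. Let $b=\frac{256\log n}{\varepsilon^2m_2}$, $b'=\frac{256\log n}{m_2}$, let $X^{S_1}_i,Y^{T_1}_i$ be the numbers of occurrences of $i$ in $S_1,T_1$, and define $B=\{i: X^{S_1}_i/m_1>b\}\cup\{i:Y^{T_1}_i/m_2>b\}$, $M=\{i: b'\leq\max\{X^{S_1}_i/m_1,Y^{T_1}_i/m_2\}\leq b\}$, $H=[n]\setminus(B\cup M)$. Then with probability $1-o(1/n)$ over $S_1,T_1$, the sets $B$, $M$ and $H$ are all faithful.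
   Context: "Drawing $\mathrm{Poi}(m)$ samples" means drawing $N\sim\mathrm{Poisson}(m)$ then $N$ i.i.d. samples. $B$ is faithful if every $i\in B$ has $p_i>b/2$ or $q_i>b/2$; $M$ is faithful if every $i\in M$ has $b'/2\leq\max\{p_i,q_i\}\leq2b$; $H$ is faithful if every $i\in H$ has $p_i<2b'$ and $q_i<2b'$. *)

theory Defs
  imports "HOL-Probability.Probability"
begin

definition distr_on :: "nat \<Rightarrow> nat pmf \<Rightarrow> bool" where
  "distr_on n p \<longleftrightarrow> set_pmf p \<subseteq> {1..n}"

definition poi_samples :: "real \<Rightarrow> 'a pmf \<Rightarrow> 'a list pmf" where
  "poi_samples m p = bind_pmf (poisson_pmf m) (\<lambda>N. replicate_pmf N p)"

definition thr_b :: "nat \<Rightarrow> real \<Rightarrow> real \<Rightarrow> real" where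
  "thr_b n \<epsilon> m2 = 256 * ln (real n) / (\<epsilon>\<^sup>2 * m2)"

definition thr_b' :: "nat \<Rightarrow> real \<Rightarrow> real" where
  "thr_b' n m2 = 256 * ln (real n) / m2"

definition setB :: "nat \<Rightarrow> real \<Rightarrow> real \<Rightarrow> real \<Rightarrow> nat list \<Rightarrow> nat list \<Rightarrow> nat set" where
  "setB n \<epsilon> m1 m2 S T =
     {i \<in> {1..n}. real (count_list S i) / m1 > thr_b n \<epsilon> m2}
   \<union> {i \<in> {1..n}. real (count_list T i) / m2 > thr_b n \<epsilon> m2}"

definition setM :: "nat \<Rightarrow> real \<Rightarrow> real \<Rightarrow> real \<Rightarrow> nat list \<Rightarrow> nat list \<Rightarrow> nat set" where
  "setM n \<epsilon> m1 m2 S T =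
     {i \<in> {1..n}. thr_b' n m2 \<le> max (real (count_list S i) / m1) (real (count_list T i) / m2)
                 \<and> max (real (count_list S i) / m1) (real (count_list T i) / m2) \<le> thr_b n \<epsilon> m2}"

definition setH :: "nat \<Rightarrow> real \<Rightarrow> real \<Rightarrow> real \<Rightarrow> nat list \<Rightarrow> nat list \<Rightarrow> nat set" where
  "setH n \<epsilon> m1 m2 S T = {1..n} - (setB n \<epsilon> m1 m2 S T \<union> setM n \<epsilon> m1 m2 S T)"

definition B_faithful :: "nat pmf \<Rightarrow> nat pmf \<Rightarrow> real \<Rightarrow> nat set \<Rightarrow> bool" where
  "B_faithful p q b B \<longleftrightarrow> (\<forall>i\<in>B. pmf p i > b / 2 \<or> pmf q i > b / 2)"

definition M_faithful :: "nat pmf \<Rightarrow> nat pmf \<Rightarrow> real \<Rightarrow> real \<Rightarrow> nat set \<Rightarrow> bool" where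
  "M_faithful p q b b' M \<longleftrightarrow>
     (\<forall>i\<in>M. b' / 2 \<le> max (pmf p i) (pmf q i) \<and> max (pmf p i) (pmf q i) \<le> 2 * b)"

definition H_faithful :: "nat pmf \<Rightarrow> nat pmf \<Rightarrow> real \<Rightarrow> nat set \<Rightarrow> bool" where
  "H_faithful p q b' H \<longleftrightarrow> (\<forall>i\<in>H. pmf p i < 2 * b' \<and> pmf q i < 2 * b')"

end

theory Submission
  imports Defs
begin

text \<open>
  For a fixed element \<open>i\<close>, the number of occurrences of \<open>i\<close> in \<open>Poi(m)\<close> samples from \<open>p\<close> is
  Poisson distributed with mean \<open>m p\<^sub>i\<close>, so its generating function is \<open>E[t\<^sup>X] = exp (m p\<^sub>i (t - 1))\<close>.
  Chernoff bounds with \<open>t = 2\<close> and \<open>t = 1/2\<close> show that the empirical frequency \<open>X / m\<close> lies on the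
  correct side of a threshold \<open>a\<close> whenever \<open>p\<^sub>i \<le> a/2\<close> or \<open>p\<^sub>i \<ge> 2a\<close>, except with probability
  \<open>exp (-m a / 6)\<close>. Both thresholds \<open>b, b'\<close> satisfy \<open>m a \<ge> 256 ln n\<close>, so each of these
  \<open>4n\<close> events fails with probability at most \<open>n\<^sup>-\<^sup>3\<close>; when none fails, the classification into
  \<open>B\<close>, \<open>M\<close>, \<open>H\<close> is faithful by elementary comparisons. A union bound gives failure probability
  \<open>4 / n\<^sup>2 = o(1/n)\<close>.
\<close>

abbreviation emp_freq :: "real \<Rightarrow> 'a list \<Rightarrow> 'a \<Rightarrow> real" where
  "emp_freq m S i \<equiv> real (count_list S i) / m"

lemma nn_integral_pmf_if_eq:
  assumes "t \<ge> 0"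
  shows "(\<integral>\<^sup>+x. ennreal (if x = i then t else 1) \<partial>measure_pmf p) = ennreal (1 - pmf p i + pmf p i * t)"
proof -
  have "(\<lambda>x. ennreal (if x = i then t else 1)) = (\<lambda>x. ennreal t * indicator {i} x + indicator (-{i}) x)"
    by (auto simp: indicator_def)
  then have "(\<integral>\<^sup>+x. ennreal (if x = i then t else 1) \<partial>measure_pmf p)
       = ennreal t * emeasure (measure_pmf p) {i} + emeasure (measure_pmf p) (-{i})"
    by (simp add: nn_integral_add nn_integral_cmult)
  also have "\<dots> = ennreal (t * pmf p i) + ennreal (1 - pmf p i)"
  proof -
    have "measure_pmf.prob p (-{i}) = 1 - pmf p i"
      using measure_pmf.prob_compl[of "{i}" p] by (simp add: measure_pmf_single Compl_eq_Diff_UNIV)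
    then show ?thesis using assms
      by (simp add: measure_pmf.emeasure_eq_measure measure_pmf_single ennreal_mult)
  qed
  also have "\<dots> = ennreal (1 - pmf p i + pmf p i * t)"
    using assms by (subst ennreal_plus[symmetric]) (auto simp: pmf_le_1 algebra_simps)
  finally show ?thesis .
qed

lemma count_list_generating_replicate_pmf:
  assumes "t \<ge> 0"
  shows "(\<integral>\<^sup>+ xs. ennreal (t ^ count_list xs i) \<partial>replicate_pmf N p) = ennreal ((1 - pmf p i + pmf p i * t) ^ N)"
proof (induction N)
  case 0
  then show ?case by simp
next
  case (Suc N)
  have nonneg: "0 \<le> 1 - pmf p i + pmf p i * t"
    using assms pmf_le_1[of p i] by (simp add: add_nonneg_nonneg)
  have "(\<integral>\<^sup>+ xs. ennreal (t ^ count_list xs i) \<partial>replicate_pmf (Suc N) p)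
     = (\<integral>\<^sup>+x. (\<integral>\<^sup>+xs. ennreal (if x = i then t else 1) * ennreal (t ^ count_list xs i) \<partial>replicate_pmf N p) \<partial>p)"
    using assms by (auto intro!: nn_integral_cong simp: ennreal_mult[symmetric])
  also have "\<dots> = (\<integral>\<^sup>+x. ennreal (if x = i then t else 1) * ennreal ((1 - pmf p i + pmf p i * t) ^ N) \<partial>p)"
    by (simp add: nn_integral_cmult Suc)
  also have "\<dots> = ennreal (1 - pmf p i + pmf p i * t) * ennreal ((1 - pmf p i + pmf p i * t) ^ N)"
    using assms by (simp add: nn_integral_multc nn_integral_pmf_if_eq)
  also have "\<dots> = ennreal ((1 - pmf p i + pmf p i * t) ^ Suc N)"
    using nonneg by (simp only: ennreal_mult[symmetric] zero_le_power power_Suc)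
  finally show ?case .
qed

lemma count_list_generating_poi_samples:
  assumes "t \<ge> 0" "m > 0"
  shows "(\<integral>\<^sup>+ xs. ennreal (t ^ count_list xs i) \<partial>poi_samples m p) = ennreal (exp (m * pmf p i * (t - 1)))"
proof -
  define a where "a = 1 - pmf p i + pmf p i * t"
  have "a \<ge> 0" using assms pmf_le_1[of p i] by (simp add: a_def add_nonneg_nonneg)
  have sums: "(\<lambda>N. (m * a) ^ N / fact N * exp (-m)) sums (exp (m * a) * exp (-m))"
    using sums_mult2[OF exp_converges[of "m * a"], of "exp (-m)"] by (simp add: divide_inverse mult.commute)
  have "(\<integral>\<^sup>+ xs. ennreal (t ^ count_list xs i) \<partial>poi_samples m p)
      = (\<integral>\<^sup>+ N. ennreal (a ^ N) \<partial>poisson_pmf m)"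
    unfolding poi_samples_def a_def using assms by (simp add: count_list_generating_replicate_pmf)
  also have "\<dots> = (\<integral>\<^sup>+ N. ennreal ((m * a) ^ N / fact N * exp (-m)) \<partial>count_space UNIV)"
    unfolding nn_integral_measure_pmf using assms \<open>a \<ge> 0\<close>
    by (intro nn_integral_cong) (simp add: ennreal_mult[symmetric] power_mult_distrib)
  also have "\<dots> = ennreal (\<Sum>N. (m * a) ^ N / fact N * exp (-m))"
    unfolding nn_integral_count_space_nat using sums \<open>a \<ge> 0\<close> assms
    by (intro suminf_ennreal2) (auto simp: sums_summable)
  also have "\<dots> = ennreal (exp (m * a) * exp (-m))"
    using sums sums_unique by metis
  also have "exp (m * a) * exp (-m) = exp (m * pmf p i * (t - 1))"
    by (simp add: a_def mult_exp_exp algebra_simps)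
  finally show ?thesis .
qed

lemma poi_samples_chernoff:
  assumes "m > 0" "t > 0" "\<And>S. S \<in> A \<Longrightarrow> t powr c \<le> t ^ count_list S i"
  shows "measure_pmf.prob (poi_samples m p) A \<le> exp (m * pmf p i * (t - 1)) / t powr c"
proof -
  have "emeasure (measure_pmf (poi_samples m p)) A = (\<integral>\<^sup>+ S. indicator A S \<partial>poi_samples m p)"
    by simp
  also have "\<dots> \<le> (\<integral>\<^sup>+ S. ennreal (1 / t powr c) * ennreal (t ^ count_list S i) \<partial>poi_samples m p)"
  proof (intro nn_integral_mono)
    fix S
    show "indicator A S \<le> ennreal (1 / t powr c) * ennreal (t ^ count_list S i)"
    proof (cases "S \<in> A")
      case True
      then have "1 \<le> 1 / t powr c * t ^ count_list S i"
        using assms by (simp add: field_simps)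
      then show ?thesis using True assms by (simp add: ennreal_mult[symmetric])
    qed simp
  qed
  also have "\<dots> = ennreal (1 / t powr c) * ennreal (exp (m * pmf p i * (t - 1)))"
    using assms by (simp add: nn_integral_cmult count_list_generating_poi_samples)
  also have "\<dots> = ennreal (exp (m * pmf p i * (t - 1)) / t powr c)"
    by (simp add: ennreal_mult[symmetric])
  finally show ?thesis
    by (simp add: measure_pmf.emeasure_eq_measure ennreal_le_iff)
qed

lemma ln2_le_five_sixths: "ln (2::real) \<le> 5/6"
proof -
  have "ln (2::real) = ln (3/2) + ln (4/3)" using ln_mult[of "3/2::real" "4/3"] by simp
  also have "\<dots> \<le> (3/2 - 1) + (4/3 - 1)" by (intro add_mono ln_le_minus_one) auto
  finally show ?thesis by simp
qed

lemma poi_samples_upper_tail: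
  assumes "m > 0" "2 * pmf p i \<le> a"
  shows "measure_pmf.prob (poi_samples m p) {S. a \<le> emp_freq m S i} \<le> exp (- (m * a) / 6)"
proof -
  have "measure_pmf.prob (poi_samples m p) {S. a \<le> emp_freq m S i} \<le> exp (m * pmf p i * (2 - 1)) / 2 powr (m * a)"
    using assms by (intro poi_samples_chernoff) (auto simp: pos_le_divide_eq powr_realpow[symmetric] mult.commute)
  also have "\<dots> = exp (m * pmf p i - m * a * ln 2)"
    by (simp add: powr_def exp_diff)
  also have "\<dots> \<le> exp (- (m * a) / 6)"
  proof -
    have "0 \<le> a" using assms pmf_nonneg[of p i] by linarith
    have "m * pmf p i \<le> m * a / 2" using assms by simp
    moreover have "m * a * (2/3) \<le> m * a * ln 2"
      using assms \<open>0 \<le> a\<close> by (intro mult_left_mono ln2_ge_two_thirds) simp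
    ultimately show ?thesis by simp
  qed
  finally show ?thesis .
qed

lemma poi_samples_lower_tail:
  assumes "m > 0" "2 * a \<le> pmf p i" "0 \<le> a"
  shows "measure_pmf.prob (poi_samples m p) {S. emp_freq m S i \<le> a} \<le> exp (- (m * a) / 6)"
proof -
  have "measure_pmf.prob (poi_samples m p) {S. emp_freq m S i \<le> a} \<le> exp (m * pmf p i * (1/2 - 1)) / (1/2) powr (m * a)"
  proof (intro poi_samples_chernoff)
    fix S assume "S \<in> {S. emp_freq m S i \<le> a}"
    then have "real (count_list S i) \<le> m * a"
      using assms by (simp add: pos_divide_le_eq mult.commute)
    then show "(1/2) powr (m * a) \<le> (1/2) ^ count_list S i"
      by (simp add: powr_realpow[symmetric] powr_mono')
  qed (use assms in auto)
  also have "\<dots> = exp (m * a * ln 2 - m * pmf p i / 2)"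
    by (simp add: powr_def ln_div exp_diff[symmetric] algebra_simps)
  also have "\<dots> \<le> exp (- (m * a) / 6)"
  proof -
    have "m * a \<le> m * pmf p i / 2" using assms by simp
    moreover have "m * a * ln 2 \<le> m * a * (5/6)"
      using assms by (intro mult_left_mono ln2_le_five_sixths) simp
    ultimately show ?thesis by simp
  qed
  finally show ?thesis .
qed

definition freq_faithful :: "real \<Rightarrow> real \<Rightarrow> 'a pmf \<Rightarrow> 'a \<Rightarrow> 'a list \<Rightarrow> bool" where
  "freq_faithful a m p i S \<longleftrightarrow>
     (pmf p i \<le> a / 2 \<longrightarrow> emp_freq m S i < a) \<and> (2 * a \<le> pmf p i \<longrightarrow> a < emp_freq m S i)"

lemma prob_not_freq_faithful:
  assumes "m > 0" "a > 0"
  shows "measure_pmf.prob (poi_samples m p) {S. \<not> freq_faithful a m p i S} \<le> exp (- (m * a) / 6)"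
proof -
  consider "pmf p i \<le> a / 2" | "2 * a \<le> pmf p i" | "a / 2 < pmf p i \<and> pmf p i < 2 * a"
    by linarith
  then show ?thesis
  proof cases
    case 1
    then have "{S. \<not> freq_faithful a m p i S} = {S. a \<le> emp_freq m S i}"
      using assms by (auto simp: freq_faithful_def)
    then show ?thesis using poi_samples_upper_tail[of m p i a] 1 assms by simp
  next
    case 2
    then have "{S. \<not> freq_faithful a m p i S} = {S. emp_freq m S i \<le> a}"
      using assms by (auto simp: freq_faithful_def)
    then show ?thesis using poi_samples_lower_tail[of m a p i] 2 assms by simp
  next
    case 3
    then show ?thesis by (simp add: freq_faithful_def)
  qed
qed

lemma B_faithful_setB:
  assumes "\<And>i. i \<in> {1..n} \<Longrightarrow> freq_faithful (thr_b n \<epsilon> m2) m1 p i S \<and> freq_faithful (thr_b n \<epsilon> m2) m2 q i T"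
  shows "B_faithful p q (thr_b n \<epsilon> m2) (setB n \<epsilon> m1 m2 S T)"
  using assms unfolding B_faithful_def setB_def freq_faithful_def by force

lemma M_faithful_setM:
  assumes "\<And>i. i \<in> {1..n} \<Longrightarrow> freq_faithful (thr_b n \<epsilon> m2) m1 p i S \<and> freq_faithful (thr_b n \<epsilon> m2) m2 q i T
      \<and> freq_faithful (thr_b' n m2) m1 p i S \<and> freq_faithful (thr_b' n m2) m2 q i T"
  shows "M_faithful p q (thr_b n \<epsilon> m2) (thr_b' n m2) (setM n \<epsilon> m1 m2 S T)"
  unfolding M_faithful_def setM_def
proof safe
  fix i assume "i \<in> {1..n}"
  from assms[OF this] show "thr_b' n m2 / 2 \<le> max (pmf p i) (pmf q i)"
    "max (pmf p i) (pmf q i) \<le> 2 * thr_b n \<epsilon> m2"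
    if "thr_b' n m2 \<le> max (emp_freq m1 S i) (emp_freq m2 T i)"
       "max (emp_freq m1 S i) (emp_freq m2 T i) \<le> thr_b n \<epsilon> m2"
    using that unfolding freq_faithful_def by (auto simp: max_def split: if_splits)
qed

lemma H_faithful_setH:
  assumes "\<And>i. i \<in> {1..n} \<Longrightarrow> freq_faithful (thr_b' n m2) m1 p i S \<and> freq_faithful (thr_b' n m2) m2 q i T"
  shows "H_faithful p q (thr_b' n m2) (setH n \<epsilon> m1 m2 S T)"
  using assms unfolding H_faithful_def setH_def setM_def setB_def freq_faithful_def
  by (force simp: max_def split: if_splits)

lemma prob_pair_pmf_fst: "measure_pmf.prob (pair_pmf A B) {x. P (fst x)} = measure_pmf.prob A {a. P a}"
proof -
  have "{x. P (fst x)} = fst -` {a. P a}" by auto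
  then show ?thesis by (metis measure_map_pmf map_fst_pair_pmf)
qed

lemma prob_pair_pmf_snd: "measure_pmf.prob (pair_pmf A B) {x. P (snd x)} = measure_pmf.prob B {b. P b}"
proof -
  have "{x. P (snd x)} = snd -` {b. P b}" by auto
  then show ?thesis by (metis measure_map_pmf map_snd_pair_pmf)
qed

lemma prob_not_freq_faithful_pair:
  assumes "finite I" "finite A" "m1 > 0" "m2 > 0" "\<And>a. a \<in> A \<Longrightarrow> 0 < a \<and> c \<le> m1 * a \<and> c \<le> m2 * a"
  shows "measure_pmf.prob (pair_pmf (poi_samples m1 p) (poi_samples m2 q))
      {x. \<exists>i\<in>I. \<exists>a\<in>A. \<not> freq_faithful a m1 p i (fst x) \<or> \<not> freq_faithful a m2 q i (snd x)}
    \<le> 2 * card (I \<times> A) * exp (- c / 6)"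
proof -
  let ?M = "pair_pmf (poi_samples m1 p) (poi_samples m2 q)"
  define E where "E = (\<lambda>(i, a). {x. \<not> freq_faithful a m1 p i (fst x)} \<union> {x. \<not> freq_faithful a m2 q i (snd x)})"
  have E_le: "measure_pmf.prob ?M (E ia) \<le> exp (- c / 6) + exp (- c / 6)" if "ia \<in> I \<times> A" for ia
  proof -
    obtain i a where ia: "ia = (i, a)" and a: "0 < a" "c \<le> m1 * a" "c \<le> m2 * a"
      using \<open>ia \<in> I \<times> A\<close> assms(5) by auto
    have "measure_pmf.prob ?M (E ia)
        \<le> measure_pmf.prob ?M {x. \<not> freq_faithful a m1 p i (fst x)}
          + measure_pmf.prob ?M {x. \<not> freq_faithful a m2 q i (snd x)}"
      unfolding E_def ia by (simp add: measure_Un_le)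
    also have "\<dots> = measure_pmf.prob (poi_samples m1 p) {S. \<not> freq_faithful a m1 p i S}
          + measure_pmf.prob (poi_samples m2 q) {T. \<not> freq_faithful a m2 q i T}"
      by (simp only: prob_pair_pmf_fst[where P = "\<lambda>S. \<not> freq_faithful a m1 p i S"]
        prob_pair_pmf_snd[where P = "\<lambda>T. \<not> freq_faithful a m2 q i T"])
    also have "\<dots> \<le> exp (- (m1 * a) / 6) + exp (- (m2 * a) / 6)"
      using assms a by (intro add_mono prob_not_freq_faithful) auto
    also have "\<dots> \<le> exp (- c / 6) + exp (- c / 6)"
      using a by (intro add_mono) simp_all
    finally show ?thesis .
  qed
  have "{x. \<exists>i\<in>I. \<exists>a\<in>A. \<not> freq_faithful a m1 p i (fst x) \<or> \<not> freq_faithful a m2 q i (snd x)}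
      = (\<Union>ia\<in>I \<times> A. E ia)"
    by (auto simp: E_def)
  also have "measure_pmf.prob ?M \<dots> \<le> (\<Sum>ia\<in>I \<times> A. measure_pmf.prob ?M (E ia))"
    using assms by (intro measure_UNION_le) auto
  also have "\<dots> \<le> (\<Sum>ia\<in>I \<times> A. exp (- c / 6) + exp (- c / 6))"
    by (intro sum_mono E_le)
  finally show ?thesis by simp
qed

lemma thr_b_pos_scaled:
  assumes "n \<ge> 2" "0 < \<epsilon>" "\<epsilon> \<le> 1" "0 < m2" "m2 \<le> m"
  shows "0 < thr_b n \<epsilon> m2" "256 * ln (real n) \<le> m * thr_b n \<epsilon> m2"
proof -
  have "\<epsilon>\<^sup>2 \<le> 1" using assms by (simp add: power_le_one)
  have L: "0 < ln (real n)" using assms by simp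
  then show pos: "0 < thr_b n \<epsilon> m2" using assms by (simp add: thr_b_def)
  have "256 * ln (real n) \<le> 256 * ln (real n) / \<epsilon>\<^sup>2"
    using L \<open>\<epsilon>\<^sup>2 \<le> 1\<close> assms by (simp add: le_divide_eq)
  also have "\<dots> = m2 * thr_b n \<epsilon> m2" using assms by (simp add: thr_b_def)
  also have "\<dots> \<le> m * thr_b n \<epsilon> m2" using assms pos by (simp add: mult_right_mono)
  finally show "256 * ln (real n) \<le> m * thr_b n \<epsilon> m2" .
qed

lemma thr_b'_pos_scaled:
  assumes "n \<ge> 2" "0 < m2" "m2 \<le> m"
  shows "0 < thr_b' n m2" "256 * ln (real n) \<le> m * thr_b' n m2"
proof -
  show pos: "0 < thr_b' n m2" using assms by (simp add: thr_b'_def)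
  have "256 * ln (real n) = m2 * thr_b' n m2" using assms by (simp add: thr_b'_def)
  also have "\<dots> \<le> m * thr_b' n m2" using assms pos by (simp add: mult_right_mono)
  finally show "256 * ln (real n) \<le> m * thr_b' n m2" .
qed

lemma prob_faithful_partition_ge2:
  assumes "n \<ge> 2" "0 < \<epsilon>" "\<epsilon> \<le> 1" "0 < m2" "m2 \<le> m1"
  shows "measure_pmf.prob (pair_pmf (poi_samples m1 p) (poi_samples m2 q))
          {(S, T). B_faithful p q (thr_b n \<epsilon> m2) (setB n \<epsilon> m1 m2 S T)
                 \<and> M_faithful p q (thr_b n \<epsilon> m2) (thr_b' n m2) (setM n \<epsilon> m1 m2 S T)
                 \<and> H_faithful p q (thr_b' n m2) (setH n \<epsilon> m1 m2 S T)}
          \<ge> 1 - 4 / real n ^ 2"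
    (is "measure_pmf.prob ?M ?G \<ge> _")
proof -
  define A where "A = {thr_b n \<epsilon> m2, thr_b' n m2}"
  define F where "F = {x. \<exists>i\<in>{1..n}. \<exists>a\<in>A.
      \<not> freq_faithful a m1 p i (fst x) \<or> \<not> freq_faithful a m2 q i (snd x)}"
  have "x \<in> ?G" if "x \<notin> F" for x
  proof -
    obtain S T where x: "x = (S, T)" by fastforce
    have "freq_faithful a m1 p i S \<and> freq_faithful a m2 q i T" if i: "i \<in> {1..n}" and a: "a \<in> A" for i a
      using \<open>x \<notin> F\<close> i a unfolding F_def x by auto
    then show ?thesis
      unfolding x A_def by (auto intro!: B_faithful_setB M_faithful_setM H_faithful_setH)
  qed
  then have "UNIV - ?G \<subseteq> F" by blast
  have thresholds: "0 < a \<and> 18 * ln (real n) \<le> m1 * a \<and> 18 * ln (real n) \<le> m2 * a" if a: "a \<in> A" for a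
  proof -
    have "0 < a \<and> 256 * ln (real n) \<le> m1 * a \<and> 256 * ln (real n) \<le> m2 * a"
      using a assms thr_b_pos_scaled[of n \<epsilon> m2 m1] thr_b_pos_scaled[of n \<epsilon> m2 m2]
        thr_b'_pos_scaled[of n m2 m1] thr_b'_pos_scaled[of n m2 m2]
      unfolding A_def by auto
    moreover have "0 \<le> ln (real n)" using assms by simp
    ultimately show ?thesis by linarith
  qed
  have "measure_pmf.prob ?M (UNIV - ?G) \<le> measure_pmf.prob ?M F"
    using \<open>UNIV - ?G \<subseteq> F\<close> by (intro measure_pmf.finite_measure_mono) auto
  also have "\<dots> \<le> 2 * card ({1..n} \<times> A) * exp (- (18 * ln (real n)) / 6)"
    unfolding F_def using assms thresholds
    by (intro prob_not_freq_faithful_pair) (auto simp: A_def)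
  also have "\<dots> \<le> 2 * (2 * real n) * (1 / real n ^ 3)"
  proof -
    have "card ({1..n} \<times> A) \<le> 2 * n"
      by (simp add: card_cartesian_product A_def card_insert_le_m1)
    moreover have "exp (3 * ln (real n)) = real n ^ 3"
      using assms ln_realpow[of "real n" 3] exp_ln[of "real n ^ 3"] by simp
    then have "exp (- (18 * ln (real n)) / 6) = 1 / real n ^ 3"
      by (simp add: exp_minus inverse_eq_divide)
    ultimately show ?thesis
      by (intro mult_mono) auto
  qed
  also have "\<dots> = 4 / real n ^ 2"
    using assms by (simp add: power2_eq_square power3_eq_cube field_simps)
  finally show ?thesis
    using measure_pmf.prob_compl[of ?G ?M] by simp
qed

lemma prob_faithful_partition:
  assumes "0 < n" "0 < \<epsilon>" "\<epsilon> \<le> 1" "0 < m2" "m2 \<le> m1"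
  shows "measure_pmf.prob (pair_pmf (poi_samples m1 p) (poi_samples m2 q))
          {(S, T). B_faithful p q (thr_b n \<epsilon> m2) (setB n \<epsilon> m1 m2 S T)
                 \<and> M_faithful p q (thr_b n \<epsilon> m2) (thr_b' n m2) (setM n \<epsilon> m1 m2 S T)
                 \<and> H_faithful p q (thr_b' n m2) (setH n \<epsilon> m1 m2 S T)}
          \<ge> 1 - 4 / real n ^ 2"
proof (cases "n = 1")
  case True
  then show ?thesis by (simp add: order_trans[OF _ measure_nonneg])
next
  case False
  with assms show ?thesis by (intro prob_faithful_partition_ge2) auto
qed

lemma distr_on_pos: "distr_on n p \<Longrightarrow> 0 < n"
  using set_pmf_not_empty[of p] by (auto simp: distr_on_def)

theorem lemma7:
  "\<exists>f :: nat \<Rightarrow> real. (\<lambda>n. real n * f n) \<longlonglongrightarrow> 0 \<and>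
     (\<forall>n p q \<epsilon> m1 m2. distr_on n p \<longrightarrow> distr_on n q \<longrightarrow> 0 < \<epsilon> \<longrightarrow> \<epsilon> \<le> 1 \<longrightarrow>
        m1 \<ge> m2 \<longrightarrow> m2 > 0 \<longrightarrow>
        measure_pmf.prob (pair_pmf (poi_samples m1 p) (poi_samples m2 q))
          {(S, T). B_faithful p q (thr_b n \<epsilon> m2) (setB n \<epsilon> m1 m2 S T)
                 \<and> M_faithful p q (thr_b n \<epsilon> m2) (thr_b' n m2) (setM n \<epsilon> m1 m2 S T)
                 \<and> H_faithful p q (thr_b' n m2) (setH n \<epsilon> m1 m2 S T)}
          \<ge> 1 - f n)"
proof (intro exI[of _ "\<lambda>n. 4 / real n ^ 2"] conjI allI impI)
  have "(\<lambda>n. 4 * inverse (real n)) \<longlonglongrightarrow> 0"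
    by (intro tendsto_mult_right_zero lim_inverse_n)
  then show "(\<lambda>n. real n * (4 / real n ^ 2)) \<longlonglongrightarrow> 0"
    by (rule Lim_transform_eventually) (auto simp: power2_eq_square field_simps)
qed (auto dest: distr_on_pos intro: prob_faithful_partition)

end
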